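(* Let $0<x_1<\cdots<x_m<1$, $k_0,k_1\in\mathbb{R}$, $\bar y_1,\dots,\bar y_m\in\mathbb{R}$, and for each $j$ let $\varphi_j:\mathbb{R}\to\mathbb{R}$ be a Gevrey function of order $\sigma$ with $1<\sigma<2$. Put $y_j(t)=\bar y_j\varphi_j(t)$. Then, for every $j$, every $x\in(0,1)$ and every $t$, each of the following series converges: for $x\in(0,x_j)$, $$\sum_{n=0}^\infty\sum_{k=0}^n\frac{x^{2k+1}(x_j-1)^{2(n-k)+1}}{(2k+1)!\,(2(n-k)+1)!}y_j^{(n)}(t),\quad \sum_{n=0}^\infty\sum_{k=0}^n\frac{x^{2k+1}(x_j-1)^{2(n-k)}}{(2k+1)!\,(2(n-k))!}y_j^{(n)}(t),$$ $$\sum_{n=0}^\infty\sum_{k=0}^n\frac{x^{2k}(x_j-1)^{2(n-k)+1}}{(2k)!\,(2(n-k)+1)!}y_j^{(n)}(t),\quad \sum_{n=0}^\infty\sum_{k=0}^n\frac{x^{2k}(x_j-1)^{2(n-k)}}{(2k)!\,(2(n-k))!}y_j^{(n)}(t),$$ the same four series with the roles of $x$ and $x_j$ interchanged (i.e. $x_j^{\cdot}(x-1)^{\cdot}$ in place of $x^{\cdot}(x_j-1)^{\cdot}$) for $x\in[x_j,1)$; and the series $$\sum_{n=0}^\infty\frac{y_j^{(n)}(t)}{(2n+1)!},\qquad \sum_{n=0}^\infty\frac{y_j^{(n)}(t)}{(2n)!},\qquad \sum_{n=0}^\infty\frac{y_j^{(n+1)}(t)}{(2n+1)!}.$$ Consequently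 the series $$\xi^j(x,t)=\sum_{n=0}^\infty\sum_{k=0}^n\Big[\tfrac{k_0k_1x^{2k+1}(x_j-1)^{2(n-k)+1}}{(2k+1)!(2(n-k)+1)!}-\tfrac{k_0x^{2k+1}(x_j-1)^{2(n-k)}}{(2k+1)!(2(n-k))!}+\tfrac{k_1x^{2k}(x_j-1)^{2(n-k)+1}}{(2k)!(2(n-k)+1)!}-\tfrac{x^{2k}(x_j-1)^{2(n-k)}}{(2k)!(2(n-k))!}\Big]y_j^{(n)}(t)$$ for $x\in(0,x_j)$ (and its analogue with $x,x_j$ interchanged for $x\in[x_j,1)$), and $$u_j(t)=k_0k_1\sum_{n=0}^\infty\frac{y_j^{(n)}(t)}{(2n+1)!}+(k_0+k_1)\sum_{n=0}^\infty\frac{y_j^{(n)}(t)}{(2n)!}+\sum_{n=0}^\infty\frac{y_j^{(n+1)}(t)}{(2n+1)!}$$ are convergent.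
   Context: A smooth function $\varphi$ is called a Gevrey function of order $\sigma>0$ if there exist constants $K,M>0$ such that $|\varphi^{(k+1)}(t)|\le M\,(k!)^\sigma/K^k$ for all integers $k\ge0$ and all $t$ (in the paper, $\varphi_j$ are smooth transition functions from 0 to 1, constant outside a bounded interval $[0,T]$, so the bound is required on that interval). *)

theory Defs
  imports "HOL-Analysis.Analysis"
begin

definition smooth_fun :: "(real \<Rightarrow> real) \<Rightarrow> bool" where
  "smooth_fun f \<longleftrightarrow> (\<forall>k t. ((deriv ^^ k) f) differentiable (at t))"

definition gevrey :: "real \<Rightarrow> (real \<Rightarrow> real) \<Rightarrow> bool" where
  "gevrey \<sigma> f \<longleftrightarrow> smooth_fun f \<and>
     (\<exists>K M. K > 0 \<and> M > 0 \<and>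
        (\<forall>k t. \<bar>(deriv ^^ (Suc k)) f t\<bar> \<le> M * (fact k) powr \<sigma> / K ^ k))"

end

theory Submission
  imports Defs
begin

text \<open>The derivatives of a Gevrey function of order \<open>\<sigma>\<close> grow at most like \<open>C B\<^sup>n (n!)\<^sup>\<sigma>\<close>.
  Since \<open>p! q! \<ge> (p+q)! / 2\<^sup>p\<^sup>+\<^sup>q\<close>, the \<open>n\<close>-th coefficient of each series is at most
  \<open>D A\<^sup>n / (2n)!\<close>, so every series is dominated by \<open>\<Sum> (AB)\<^sup>n (n!)\<^sup>\<sigma> / (2n)!\<close>; its ratio
  behaves like \<open>AB n\<^sup>\<sigma>\<^sup>-\<^sup>2 \<rightarrow> 0\<close>, which is where \<open>\<sigma> < 2\<close> enters.\<close>

definition gevrey_growth :: "real \<Rightarrow> (nat \<Rightarrow> real) \<Rightarrow> bool" where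
  "gevrey_growth \<sigma> d \<longleftrightarrow>
     (\<exists>C B. 0 \<le> C \<and> 0 \<le> B \<and> (\<forall>n. \<bar>d n\<bar> \<le> C * B ^ n * fact n powr \<sigma>))"

lemma deriv_iter_cmult:
  assumes "smooth_fun f"
  shows "(deriv ^^ n) (\<lambda>s. c * f s) = (\<lambda>s. c * (deriv ^^ n) f s)"
proof (induction n)
  case 0
  then show ?case by simp
next
  case (Suc n)
  have "deriv (\<lambda>s. c * (deriv ^^ n) f s) t = c * deriv ((deriv ^^ n) f) t" for t
  proof -
    have "((deriv ^^ n) f) differentiable (at t)"
      using assms unfolding smooth_fun_def by blast
    then show ?thesis
      by (simp add: DERIV_cmult DERIV_deriv_iff_real_differentiable DERIV_imp_deriv)
  qed
  then show ?case by (simp add: Suc.IH)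
qed

lemma gevrey_growth_deriv_iter:
  assumes "gevrey \<sigma> f" "0 \<le> \<sigma>"
  shows "gevrey_growth \<sigma> (\<lambda>n. (deriv ^^ n) f t)"
proof -
  obtain K M where K: "K > 0" and M: "M > 0"
    and bound: "\<And>k. \<bar>(deriv ^^ Suc k) f t\<bar> \<le> M * fact k powr \<sigma> / K ^ k"
    using assms(1) unfolding gevrey_def by blast
  have "\<bar>(deriv ^^ n) f t\<bar> \<le> (\<bar>f t\<bar> + M * K) * (1 / K) ^ n * fact n powr \<sigma>" for n
  proof (cases n)
    case 0
    then show ?thesis using K M by simp
  next
    case (Suc k)
    have "fact k powr \<sigma> \<le> (fact (Suc k) :: real) powr \<sigma>"
      using assms(2) by (intro powr_mono2) (auto simp: fact_mono)
    then have "M * fact k powr \<sigma> / K ^ k \<le> (M * K) * (1 / K) ^ Suc k * fact (Suc k) powr \<sigma>"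
      using K M by (simp add: field_simps)
    also have "\<dots> \<le> (\<bar>f t\<bar> + M * K) * (1 / K) ^ Suc k * fact (Suc k) powr \<sigma>"
      using K by (intro mult_right_mono) auto
    finally show ?thesis using bound[of k] Suc by simp
  qed
  then show ?thesis
    unfolding gevrey_growth_def using K M by (intro exI[of _ "\<bar>f t\<bar> + M * K"] exI[of _ "1 / K"]) auto
qed

lemma gevrey_growth_cmult:
  assumes "gevrey_growth \<sigma> d"
  shows "gevrey_growth \<sigma> (\<lambda>n. c * d n)"
proof -
  obtain C B where CB: "0 \<le> C" "0 \<le> B" and bound: "\<And>n. \<bar>d n\<bar> \<le> C * B ^ n * fact n powr \<sigma>"
    using assms unfolding gevrey_growth_def by blast
  have "\<bar>c * d n\<bar> \<le> (\<bar>c\<bar> * C) * B ^ n * fact n powr \<sigma>" for n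
    using mult_left_mono[OF bound[of n], of "\<bar>c\<bar>"] by (simp add: abs_mult mult_ac)
  then show ?thesis
    unfolding gevrey_growth_def using CB by (intro exI[of _ "\<bar>c\<bar> * C"] exI[of _ B]) auto
qed

lemma real_add_one_le_two_power: "real n + 1 \<le> 2 ^ n"
proof -
  have "Suc n \<le> 2 ^ n" by (simp add: Suc_leI)
  then show ?thesis by (metis of_nat_Suc of_nat_le_iff of_nat_numeral of_nat_power add.commute)
qed

lemma gevrey_growth_Suc:
  assumes "gevrey_growth \<sigma> d" "0 \<le> \<sigma>"
  shows "gevrey_growth \<sigma> (\<lambda>n. d (Suc n))"
proof -
  obtain C B where CB: "0 \<le> C" "0 \<le> B" and bound: "\<And>n. \<bar>d n\<bar> \<le> C * B ^ n * fact n powr \<sigma>"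
    using assms(1) unfolding gevrey_growth_def by blast
  have "\<bar>d (Suc n)\<bar> \<le> (C * B) * (2 powr \<sigma> * B) ^ n * fact n powr \<sigma>" for n
  proof -
    have "(real n + 1) powr \<sigma> \<le> (2 ^ n) powr \<sigma>"
      using assms(2) real_add_one_le_two_power by (intro powr_mono2) auto
    also have "\<dots> = (2 powr \<sigma>) ^ n"
      by (simp add: powr_realpow[symmetric] powr_powr mult.commute)
    finally have "fact (Suc n) powr \<sigma> \<le> (2 powr \<sigma>) ^ n * (fact n :: real) powr \<sigma>"
      by (simp add: powr_mult add.commute mult_right_mono)
    then have "C * B ^ Suc n * fact (Suc n) powr \<sigma> \<le> C * B ^ Suc n * ((2 powr \<sigma>) ^ n * fact n powr \<sigma>)"
      using CB by (intro mult_left_mono) auto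
    with bound[of "Suc n"] show ?thesis by (simp add: power_mult_distrib mult_ac)
  qed
  then show ?thesis
    unfolding gevrey_growth_def using CB by (intro exI[of _ "C * B"] exI[of _ "2 powr \<sigma> * B"]) auto
qed

lemma summable_power_fact_powr_div_fact_double:
  fixes X \<sigma> :: real
  assumes X: "0 \<le> X" and \<sigma>: "\<sigma> < 2"
  shows "summable (\<lambda>n. X ^ n * fact n powr \<sigma> / fact (2 * n))"
    (is "summable ?g")
proof -
  define r where "r n = X * (real n + 1) powr \<sigma> / ((2 * real n + 1) * (2 * real n + 2))" for n
  have g_Suc: "?g (Suc n) = ?g n * r n" for n
  proof -
    have "fact (Suc n) powr \<sigma> = (real n + 1) powr \<sigma> * (fact n :: real) powr \<sigma>"
      by (simp add: powr_mult add.commute)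
    moreover have "(fact (2 * Suc n) :: real) = (2 * real n + 2) * (2 * real n + 1) * fact (2 * n)"
      by (simp add: algebra_simps)
    ultimately show ?thesis by (simp add: r_def field_simps)
  qed
  have r_le: "r n \<le> X * (real n + 1) powr (\<sigma> - 2)" for n
  proof -
    have "(real n + 1) ^ 2 \<le> (2 * real n + 1) * (2 * real n + 2)"
      by (simp add: power2_eq_square algebra_simps)
    then have "r n \<le> X * (real n + 1) powr \<sigma> / (real n + 1) ^ 2"
      unfolding r_def using X by (intro divide_left_mono) auto
    then show ?thesis by (simp add: powr_diff powr_realpow)
  qed
  have "filterlim (\<lambda>n. real n + 1) at_top sequentially"
    using filterlim_tendsto_add_at_top[OF tendsto_const filterlim_real_sequentially, of 1]
    by (simp add: add.commute)
  then have "(\<lambda>n. X * (real n + 1) powr (\<sigma> - 2)) \<longlonglongrightarrow> X * 0"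
    using \<sigma> by (intro tendsto_mult tendsto_const tendsto_neg_powr) auto
  then have "eventually (\<lambda>n. X * (real n + 1) powr (\<sigma> - 2) < 1 / 2) sequentially"
    by (intro order_tendstoD) auto
  then obtain N where N: "\<And>n. n \<ge> N \<Longrightarrow> r n \<le> 1 / 2"
    unfolding eventually_sequentially using r_le by (meson less_le_not_le order_trans)
  have g_nonneg: "0 \<le> ?g n" for n
    using X by simp
  show ?thesis
  proof (rule summable_ratio_test[of "1 / 2" N])
    fix n assume "N \<le> n"
    then have "?g n * r n \<le> ?g n * (1 / 2)"
      using N g_nonneg by (intro mult_left_mono) auto
    then have "?g (Suc n) \<le> 1 / 2 * ?g n"
      by (metis g_Suc mult.commute)
    then show "norm (?g (Suc n)) \<le> 1 / 2 * norm (?g n)"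
      by (simp only: real_norm_def abs_of_nonneg g_nonneg)
  qed simp
qed

lemma summable_gevrey_growth_mult:
  fixes c d :: "nat \<Rightarrow> real"
  assumes "gevrey_growth \<sigma> d" "\<sigma> < 2" "0 \<le> A"
    and c: "\<And>n. \<bar>c n\<bar> \<le> D * A ^ n / fact (2 * n)"
  shows "summable (\<lambda>n. c n * d n)"
proof -
  obtain C B where CB: "0 \<le> C" "0 \<le> B" and d: "\<And>n. \<bar>d n\<bar> \<le> C * B ^ n * fact n powr \<sigma>"
    using assms(1) unfolding gevrey_growth_def by blast
  show ?thesis
  proof (rule summable_comparison_test)
    show "summable (\<lambda>n. (D * C) * ((A * B) ^ n * fact n powr \<sigma> / fact (2 * n)))"
      using assms CB by (intro summable_mult summable_power_fact_powr_div_fact_double) auto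
    have "\<bar>c n * d n\<bar> \<le> D * A ^ n / fact (2 * n) * (C * B ^ n * fact n powr \<sigma>)" for n
      unfolding abs_mult using c[of n] by (intro mult_mono d) auto
    then show "\<exists>N. \<forall>n\<ge>N. norm (c n * d n) \<le> (D * C) * ((A * B) ^ n * fact n powr \<sigma> / fact (2 * n))"
      by (simp add: power_mult_distrib mult_ac)
  qed
qed

lemma summable_gevrey_growth_mult_sum:
  fixes c :: "nat \<Rightarrow> nat \<Rightarrow> real" and d :: "nat \<Rightarrow> real"
  assumes "gevrey_growth \<sigma> d" "\<sigma> < 2" "0 \<le> A"
    and c: "\<And>n k. k \<le> n \<Longrightarrow> \<bar>c n k\<bar> \<le> D * A ^ n / fact (2 * n)"
  shows "summable (\<lambda>n. \<Sum>k\<le>n. c n k * d n)"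
proof -
  have "\<bar>\<Sum>k\<le>n. c n k\<bar> \<le> D * (2 * A) ^ n / fact (2 * n)" for n
  proof -
    have D: "0 \<le> D * A ^ n / fact (2 * n)"
      using c[of 0 n] by linarith
    have "\<bar>\<Sum>k\<le>n. c n k\<bar> \<le> (\<Sum>k\<le>n. D * A ^ n / fact (2 * n))"
      using c by (intro sum_abs[THEN order_trans] sum_mono) auto
    also have "\<dots> = (real n + 1) * (D * A ^ n / fact (2 * n))"
      by simp
    also have "\<dots> \<le> 2 ^ n * (D * A ^ n / fact (2 * n))"
      using D by (intro mult_right_mono real_add_one_le_two_power)
    finally show ?thesis by (simp add: power_mult_distrib mult_ac)
  qed
  then have "summable (\<lambda>n. (\<Sum>k\<le>n. c n k) * d n)"
    using assms by (intro summable_gevrey_growth_mult[where A = "2 * A"]) auto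
  then show ?thesis by (simp add: sum_distrib_right)
qed

lemma fact_add_le_power2_mult_fact:
  "(fact (p + q) :: real) \<le> 2 ^ (p + q) * fact p * fact q"
proof -
  have "(fact (p + q) :: nat) = fact p * fact q * ((p + q) choose p)"
    using binomial_fact_lemma[of p "p + q"] by simp
  also have "\<dots> \<le> fact p * fact q * 2 ^ (p + q)"
    using binomial_le_pow2 by simp
  finally have "(fact (p + q) :: nat) \<le> 2 ^ (p + q) * fact p * fact q"
    by (simp add: mult_ac)
  then show ?thesis
    by (metis (mono_tags) of_nat_fact of_nat_le_iff of_nat_mult of_nat_numeral of_nat_power)
qed

lemma cross_term_bound:
  fixes a b R :: real
  assumes "\<bar>a\<bar> \<le> R" "\<bar>b\<bar> \<le> R" "1 \<le> R" "2 * n \<le> p + q" "p + q \<le> 2 * n + 2"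
  shows "\<bar>a ^ p * b ^ q / (fact p * fact q)\<bar> \<le> 4 * R\<^sup>2 * (4 * R\<^sup>2) ^ n / fact (2 * n)"
proof -
  have "\<bar>a ^ p * b ^ q\<bar> \<le> R ^ p * R ^ q"
    unfolding abs_mult power_abs using assms by (intro mult_mono power_mono) auto
  also have "\<dots> = R ^ (p + q)"
    by (simp add: power_add)
  finally have num: "\<bar>a ^ p * b ^ q\<bar> * 2 ^ (p + q) \<le> (2 * R) ^ (p + q)"
    by (simp add: power_mult_distrib)
  have "\<bar>a ^ p * b ^ q / (fact p * fact q)\<bar> = \<bar>a ^ p * b ^ q\<bar> * 2 ^ (p + q) / (2 ^ (p + q) * fact p * fact q)"
    by (simp add: abs_mult)
  also have "\<dots> \<le> (2 * R) ^ (p + q) / fact (p + q)"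
    using num fact_add_le_power2_mult_fact[of p q] by (intro frac_le) auto
  also have "\<dots> \<le> (2 * R) ^ (2 * n + 2) / fact (2 * n)"
    using assms by (intro frac_le power_increasing fact_mono) auto
  also have "\<dots> = 4 * R\<^sup>2 * (4 * R\<^sup>2) ^ n / fact (2 * n)"
    by (simp add: power_add power_mult power_mult_distrib power2_eq_square)
  finally show ?thesis .
qed

lemma summable_crossed_series:
  fixes a b :: real
  assumes "gevrey_growth \<sigma> d" "\<sigma> < 2" "p + q \<le> 2"
  shows "summable (\<lambda>n. \<Sum>k\<le>n.
           a ^ (2 * k + p) * b ^ (2 * (n - k) + q) / (fact (2 * k + p) * fact (2 * (n - k) + q)) * d n)"
proof -
  define R where "R = max 1 (max \<bar>a\<bar> \<bar>b\<bar>)"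
  have R: "\<bar>a\<bar> \<le> R" "\<bar>b\<bar> \<le> R" "1 \<le> R"
    unfolding R_def by auto
  show ?thesis
    using assms(3)
    by (intro summable_gevrey_growth_mult_sum[OF assms(1,2), where A = "4 * R\<^sup>2" and D = "4 * R\<^sup>2"]
        cross_term_bound[OF R]) auto
qed

lemma summable_crossed_combination:
  fixes k0 k1 a b :: real
  assumes "gevrey_growth \<sigma> d" "\<sigma> < 2"
  shows "summable (\<lambda>n. \<Sum>k\<le>n.
            (k0 * k1 * a^(2*k+1) * b^(2*(n-k)+1) / (fact (2*k+1) * fact (2*(n-k)+1))
             - k0 * a^(2*k+1) * b^(2*(n-k)) / (fact (2*k+1) * fact (2*(n-k)))
             + k1 * a^(2*k) * b^(2*(n-k)+1) / (fact (2*k) * fact (2*(n-k)+1))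
             - a^(2*k) * b^(2*(n-k)) / (fact (2*k) * fact (2*(n-k)))) * d n)"
proof -
  define S where "S p q n =
    (\<Sum>k\<le>n. a ^ (2 * k + p) * b ^ (2 * (n - k) + q) / (fact (2 * k + p) * fact (2 * (n - k) + q)) * d n)"
    for p q n
  have "summable (S p q)" if "p + q \<le> 2" for p q
    unfolding S_def using summable_crossed_series[OF assms that] .
  then have "summable (\<lambda>n. k0 * k1 * S 1 1 n - k0 * S 1 0 n + k1 * S 0 1 n - S 0 0 n)"
    by (intro summable_diff summable_add summable_mult) auto
  moreover have "(\<Sum>k\<le>n.
            (k0 * k1 * a^(2*k+1) * b^(2*(n-k)+1) / (fact (2*k+1) * fact (2*(n-k)+1))
             - k0 * a^(2*k+1) * b^(2*(n-k)) / (fact (2*k+1) * fact (2*(n-k)))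
             + k1 * a^(2*k) * b^(2*(n-k)+1) / (fact (2*k) * fact (2*(n-k)+1))
             - a^(2*k) * b^(2*(n-k)) / (fact (2*k) * fact (2*(n-k)))) * d n)
      = k0 * k1 * S 1 1 n - k0 * S 1 0 n + k1 * S 0 1 n - S 0 0 n" for n
    unfolding S_def sum_distrib_left sum_subtractf[symmetric] sum.distrib[symmetric]
    by (intro sum.cong refl) (simp add: algebra_simps)
  ultimately show ?thesis
    by simp
qed

lemma summable_gevrey_growth_div_fact_double:
  assumes "gevrey_growth \<sigma> d" "\<sigma> < 2"
  shows "summable (\<lambda>n. d n / fact (2 * n))" "summable (\<lambda>n. d n / fact (2 * n + 1))"
proof -
  have "(fact (2 * n) :: real) \<le> fact (2 * n + 1)" for n
    by (intro fact_mono) auto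
  then have "summable (\<lambda>n. 1 / fact (2 * n + p) * d n)" if "p \<le> 1" for p
    using that by (intro summable_gevrey_growth_mult[OF assms, where A = 1 and D = 1])
      (auto simp: divide_simps elim: le_SucE)
  from this[of 0] this[of 1] show "summable (\<lambda>n. d n / fact (2 * n))" "summable (\<lambda>n. d n / fact (2 * n + 1))"
    by simp_all
qed

theorem proposition3:
  fixes m :: nat and xs :: "nat \<Rightarrow> real" and k0 k1 \<sigma> :: real
    and ybar :: "nat \<Rightarrow> real" and \<phi> :: "nat \<Rightarrow> real \<Rightarrow> real"
  assumes x_pos: "m \<ge> 1 \<Longrightarrow> 0 < xs 1"
    and x_lt1: "m \<ge> 1 \<Longrightarrow> xs m < 1"
    and x_mono: "\<And>i. 1 \<le> i \<Longrightarrow> i < m \<Longrightarrow> xs i < xs (Suc i)"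
    and sigma: "1 < \<sigma>" "\<sigma> < 2"
    and gev: "\<And>j. j \<in> {1..m} \<Longrightarrow> gevrey \<sigma> (\<phi> j)"
  shows "\<forall>j \<in> {1..m}. \<forall>x \<in> {0<..<1}. \<forall>t::real.
    (let y = (\<lambda>s. ybar j * \<phi> j s); xj = xs j in
     (x < xj \<longrightarrow>
        summable (\<lambda>n. \<Sum>k\<le>n. x^(2*k+1) * (xj-1)^(2*(n-k)+1) / (fact (2*k+1) * fact (2*(n-k)+1)) * (deriv ^^ n) y t) \<and>
        summable (\<lambda>n. \<Sum>k\<le>n. x^(2*k+1) * (xj-1)^(2*(n-k)) / (fact (2*k+1) * fact (2*(n-k))) * (deriv ^^ n) y t) \<and>
        summable (\<lambda>n. \<Sum>k\<le>n. x^(2*k) * (xj-1)^(2*(n-k)+1) / (fact (2*k) * fact (2*(n-k)+1)) * (deriv ^^ n) y t) \<and>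
        summable (\<lambda>n. \<Sum>k\<le>n. x^(2*k) * (xj-1)^(2*(n-k)) / (fact (2*k) * fact (2*(n-k))) * (deriv ^^ n) y t) \<and>
        summable (\<lambda>n. \<Sum>k\<le>n.
            (k0 * k1 * x^(2*k+1) * (xj-1)^(2*(n-k)+1) / (fact (2*k+1) * fact (2*(n-k)+1))
             - k0 * x^(2*k+1) * (xj-1)^(2*(n-k)) / (fact (2*k+1) * fact (2*(n-k)))
             + k1 * x^(2*k) * (xj-1)^(2*(n-k)+1) / (fact (2*k) * fact (2*(n-k)+1))
             - x^(2*k) * (xj-1)^(2*(n-k)) / (fact (2*k) * fact (2*(n-k)))) * (deriv ^^ n) y t)) \<and>
     (xj \<le> x \<longrightarrow>
        summable (\<lambda>n. \<Sum>k\<le>n. xj^(2*k+1) * (x-1)^(2*(n-k)+1) / (fact (2*k+1) * fact (2*(n-k)+1)) * (deriv ^^ n) y t) \<and>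
        summable (\<lambda>n. \<Sum>k\<le>n. xj^(2*k+1) * (x-1)^(2*(n-k)) / (fact (2*k+1) * fact (2*(n-k))) * (deriv ^^ n) y t) \<and>
        summable (\<lambda>n. \<Sum>k\<le>n. xj^(2*k) * (x-1)^(2*(n-k)+1) / (fact (2*k) * fact (2*(n-k)+1)) * (deriv ^^ n) y t) \<and>
        summable (\<lambda>n. \<Sum>k\<le>n. xj^(2*k) * (x-1)^(2*(n-k)) / (fact (2*k) * fact (2*(n-k))) * (deriv ^^ n) y t) \<and>
        summable (\<lambda>n. \<Sum>k\<le>n.
            (k0 * k1 * xj^(2*k+1) * (x-1)^(2*(n-k)+1) / (fact (2*k+1) * fact (2*(n-k)+1))
             - k0 * xj^(2*k+1) * (x-1)^(2*(n-k)) / (fact (2*k+1) * fact (2*(n-k)))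
             + k1 * xj^(2*k) * (x-1)^(2*(n-k)+1) / (fact (2*k) * fact (2*(n-k)+1))
             - xj^(2*k) * (x-1)^(2*(n-k)) / (fact (2*k) * fact (2*(n-k)))) * (deriv ^^ n) y t)) \<and>
     summable (\<lambda>n. (deriv ^^ n) y t / fact (2*n+1)) \<and>
     summable (\<lambda>n. (deriv ^^ n) y t / fact (2*n)) \<and>
     summable (\<lambda>n. (deriv ^^ (Suc n)) y t / fact (2*n+1)))"
proof -
  have growth: "gevrey_growth \<sigma> (\<lambda>n. (deriv ^^ n) (\<lambda>s. ybar j * \<phi> j s) t)"
    if "j \<in> {1..m}" for j t
  proof -
    have "gevrey \<sigma> (\<phi> j)"
      using gev that .
    then have "gevrey_growth \<sigma> (\<lambda>n. ybar j * (deriv ^^ n) (\<phi> j) t)"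
      using sigma by (intro gevrey_growth_cmult gevrey_growth_deriv_iter) auto
    then show ?thesis
      using \<open>gevrey \<sigma> (\<phi> j)\<close> by (simp add: gevrey_def deriv_iter_cmult)
  qed
  have growth_Suc: "gevrey_growth \<sigma> (\<lambda>n. (deriv ^^ Suc n) (\<lambda>s. ybar j * \<phi> j s) t)"
    if "j \<in> {1..m}" for j t
    using gevrey_growth_Suc[OF growth[OF that]] sigma by simp
  note crossed = summable_crossed_series[OF growth sigma(2)]
  show ?thesis
    unfolding Let_def
    using crossed[where p = 1 and q = 1] crossed[where p = 1 and q = 0]
      crossed[where p = 0 and q = 1] crossed[where p = 0 and q = 0]
      summable_crossed_combination[OF growth sigma(2)]
      summable_gevrey_growth_div_fact_double[OF growth sigma(2)]
      summable_gevrey_growth_div_fact_double(2)[OF growth_Suc sigma(2)]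
    by auto
qed

end
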